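(* Let $p,q\ge 1$ be integers. Let $\mu=(\mu_1,\dots,\mu_p)$ and $\nu=(\nu_1,\dots,\nu_q)$ be independent random probability vectors, with $\mu$ uniformly distributed on the probability simplex $\{\mu\in[0,1]^p:\sum_u\mu_u=1\}$ (Dirichlet law $\mathcal D_p$ with all parameters equal to $1$) and $\nu$ uniformly distributed on the probability simplex in $\mathbb{R}^q$ (Dirichlet law $\mathcal D_q$). Define $$\Delta=\mathbb{E}\left[\sum_{u=1}^p\sum_{v=1}^q\Big(\mu_u\nu_v-\Big(\frac{\mu_u}{q}+\frac{\nu_v}{p}-\frac{1}{pq}\Big)\Big)^2\right].$$ Then $$\Delta=\frac{1}{pq}\cdot\frac{p-1}{p+1}\cdot\frac{q-1}{q+1}\le\frac{1}{pq}.$$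
   Context: For margins $\mu,\nu$, the independence coupling is $(\mu\otimes\nu)_{u,v}=\mu_u\nu_v$ and the indetermination coupling is $(\mu\oplus\nu)_{u,v}=\frac{\mu_u}{q}+\frac{\nu_v}{p}-\frac{1}{pq}$; $\Delta$ is the expected squared Euclidean distance between them. *)

theory Defs
  imports "HOL-Probability.Probability"
begin

definition leb_coords :: "nat \<Rightarrow> (nat \<Rightarrow> real) measure" where
  "leb_coords p = PiM {..<p-1} (\<lambda>_. lborel)"

text \<open>The probability simplex in R^p, parametrised by its first p-1 coordinates.\<close>
definition simplex_coords :: "nat \<Rightarrow> (nat \<Rightarrow> real) set" where
  "simplex_coords p = {x \<in> space (leb_coords p). (\<forall>i<p-1. 0 \<le> x i) \<and> (\<Sum>i<p-1. x i) \<le> 1}"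

definition to_simplex :: "nat \<Rightarrow> (nat \<Rightarrow> real) \<Rightarrow> nat \<Rightarrow> real" where
  "to_simplex p x u = (if u < p - 1 then x u else 1 - (\<Sum>i<p-1. x i))"

text \<open>Flat Dirichlet law D_p (all parameters 1), i.e. the uniform law on the simplex,
  in the coordinates above (the map to_simplex p gives the actual vector).\<close>
definition dirichlet_flat :: "nat \<Rightarrow> (nat \<Rightarrow> real) measure" where
  "dirichlet_flat p = uniform_measure (leb_coords p) (simplex_coords p)"

definition indep_coupling :: "(nat \<Rightarrow> real) \<Rightarrow> (nat \<Rightarrow> real) \<Rightarrow> nat \<Rightarrow> nat \<Rightarrow> real" where
  "indep_coupling \<mu> \<nu> u v = \<mu> u * \<nu> v"

definition indet_coupling :: "nat \<Rightarrow> nat \<Rightarrow> (nat \<Rightarrow> real) \<Rightarrow> (nat \<Rightarrow> real) \<Rightarrow> nat \<Rightarrow> nat \<Rightarrow> real" where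
  "indet_coupling p q \<mu> \<nu> u v = \<mu> u / real q + \<nu> v / real p - 1 / (real p * real q)"

definition Delta :: "nat \<Rightarrow> nat \<Rightarrow> real" where
  "Delta p q = integral\<^sup>L (dirichlet_flat p \<Otimes>\<^sub>M dirichlet_flat q)
     (\<lambda>(x, y). let \<mu> = to_simplex p x; \<nu> = to_simplex q y in
        \<Sum>u<p. \<Sum>v<q. (indep_coupling \<mu> \<nu> u v - indet_coupling p q \<mu> \<nu> u v)\<^sup>2)"

end

theory Submission
  imports Defs
begin

text \<open>The difference of the two couplings factors as
  \<open>\<mu>\<^sub>u\<nu>\<^sub>v - (\<mu>\<^sub>u/q + \<nu>\<^sub>v/p - 1/(pq)) = (\<mu>\<^sub>u - 1/p)(\<nu>\<^sub>v - 1/q)\<close>,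
  so the squared distance between them is the product of the squared distances of \<open>\<mu>\<close> and \<open>\<nu>\<close>
  from the barycentres of their simplices, and by independence \<open>\<Delta>\<close> is the product of the two
  expectations. As \<open>\<Sum>\<^sub>u \<mu>\<^sub>u = 1\<close>, the first one is \<open>\<Sum>\<^sub>u E \<mu>\<^sub>u\<^sup>2 - 1/p\<close>, and the Dirichlet
  integral \<open>E \<mu>\<^sub>u\<^sup>2 = 2/(p(p+1))\<close>, obtained by integrating out one coordinate at a time over the
  corner simplex \<open>{x \<ge> 0, \<Sum> x \<le> t}\<close>, gives \<open>2/(p+1) - 1/p = (p-1)/(p(p+1))\<close>.\<close>

abbreviation lborel_Pi :: "'i set \<Rightarrow> ('i \<Rightarrow> real) measure" where
  "lborel_Pi I \<equiv> PiM I (\<lambda>_. lborel)"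

definition corner_simplex :: "'i set \<Rightarrow> real \<Rightarrow> ('i \<Rightarrow> real) set" where
  "corner_simplex I t = {x. (\<forall>i\<in>I. 0 \<le> x i) \<and> sum x I \<le> t}"

lemma pred_corner_simplex [measurable]:
  "finite I \<Longrightarrow> Measurable.pred (lborel_Pi I) (\<lambda>x. x \<in> corner_simplex I t)"
  unfolding corner_simplex_def by measurable

lemma sum_fun_upd_insert:
  assumes "finite I" "j \<notin> I"
  shows "sum (x(j := y)) (insert j I) = y + sum x I"
proof -
  have "sum (x(j := y)) I = sum x I"
    using assms(2) by (intro sum.cong) auto
  then show ?thesis
    using assms by simp
qed

lemma corner_simplex_insert_iff:
  assumes "finite I" "j \<notin> I"
  shows "x(j := y) \<in> corner_simplex (insert j I) t \<longleftrightarrow>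
           x \<in> corner_simplex I t \<and> y \<in> {0..t - sum x I}"
proof -
  have "(\<forall>i\<in>insert j I. 0 \<le> (x(j := y)) i) \<longleftrightarrow> 0 \<le> y \<and> (\<forall>i\<in>I. 0 \<le> x i)"
    using assms(2) by auto
  then show ?thesis
    using sum_nonneg[of I x]
    unfolding corner_simplex_def mem_Collect_eq sum_fun_upd_insert[OF assms] by auto
qed

lemma nn_integral_power_Icc:
  assumes "0 \<le> c"
  shows "(\<integral>\<^sup>+y. ennreal (y ^ k) * indicator {0..c} y \<partial>lborel) = ennreal (c ^ Suc k / Suc k)"
proof -
  have "(\<integral>\<^sup>+y. ennreal (y ^ k) * indicator {0..c} y \<partial>lborel)
      = ennreal (c ^ Suc k / Suc k - 0 ^ Suc k / Suc k)"
    using assms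
    by (intro nn_integral_FTC_Icc) (auto intro!: derivative_eq_intros simp del: power_Suc of_nat_Suc)
  then show ?thesis by simp
qed

lemma nn_integral_reflected_power_Icc:
  assumes "0 \<le> c"
  shows "(\<integral>\<^sup>+y. ennreal ((c - y) ^ k) * indicator {0..c} y \<partial>lborel) = ennreal (c ^ Suc k / Suc k)"
proof -
  have "(\<integral>\<^sup>+y. ennreal ((c - y) ^ k) * indicator {0..c} y \<partial>lborel)
      = ennreal (- ((c - c) ^ Suc k / Suc k) - - ((c - 0) ^ Suc k / Suc k))"
    using assms
    by (intro nn_integral_FTC_Icc) (auto intro!: derivative_eq_intros simp del: power_Suc of_nat_Suc)
  then show ?thesis by simp
qed

lemma nn_integral_corner_simplex_insert:
  assumes "finite I" "j \<notin> I"
    and [measurable]: "f \<in> borel_measurable (lborel_Pi (insert j I))"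
  shows "(\<integral>\<^sup>+x\<in>corner_simplex (insert j I) t. f x \<partial>lborel_Pi (insert j I))
       = (\<integral>\<^sup>+x\<in>corner_simplex I t. \<integral>\<^sup>+y\<in>{0..t - sum x I}. f (x(j := y)) \<partial>lborel \<partial>lborel_Pi I)"
    (is "_ = ?rhs")
proof -
  interpret product_sigma_finite "\<lambda>_. lborel"
    by standard
  have "(\<integral>\<^sup>+x. f x * indicator (corner_simplex (insert j I) t) x \<partial>lborel_Pi (insert j I))
      = (\<integral>\<^sup>+x. \<integral>\<^sup>+y. f (x(j := y)) * indicator (corner_simplex (insert j I) t) (x(j := y))
            \<partial>lborel \<partial>lborel_Pi I)"
    using assms by (intro product_nn_integral_insert) auto
  also have "\<dots> = (\<integral>\<^sup>+x. \<integral>\<^sup>+y. (f (x(j := y)) * indicator {0..t - sum x I} y) * indicator (corner_simplex I t) x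
            \<partial>lborel \<partial>lborel_Pi I)"
    using assms by (intro nn_integral_cong) (simp add: indicator_def corner_simplex_insert_iff mult_ac)
  also have "\<dots> = ?rhs"
    using assms by (intro nn_integral_cong nn_integral_multc) auto
  finally show ?thesis .
qed

lemma nn_integral_corner_simplex_slack_power:
  assumes "finite I" "0 \<le> t"
  shows "(\<integral>\<^sup>+x\<in>corner_simplex I t. ennreal ((t - sum x I) ^ k) \<partial>lborel_Pi I)
       = ennreal (fact k * t ^ (card I + k) / fact (card I + k))"
  using assms(1)
proof (induction I arbitrary: k rule: finite_induct)
  case empty
  show ?case using assms(2) by (simp add: PiM_empty corner_simplex_def)
next
  case (insert j I)
  have "(\<integral>\<^sup>+x\<in>corner_simplex (insert j I) t. ennreal ((t - sum x (insert j I)) ^ k) \<partial>lborel_Pi (insert j I))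
      = (\<integral>\<^sup>+x\<in>corner_simplex I t. \<integral>\<^sup>+y\<in>{0..t - sum x I}. ennreal ((t - sum x I - y) ^ k)
           \<partial>lborel \<partial>lborel_Pi I)"
    using insert
    by (subst nn_integral_corner_simplex_insert)
      (simp_all add: sum_fun_upd_insert[OF insert(1,2)] algebra_simps del: fun_upd_apply)
  also have "\<dots> = (\<integral>\<^sup>+x\<in>corner_simplex I t. ennreal ((t - sum x I) ^ Suc k) * ennreal (1 / Suc k)
                     \<partial>lborel_Pi I)"
    by (intro nn_integral_cong, rename_tac x, case_tac "x \<in> corner_simplex I t")
      (simp_all add: corner_simplex_def nn_integral_reflected_power_Icc ennreal_mult'[symmetric])
  also have "\<dots> = (\<integral>\<^sup>+x\<in>corner_simplex I t. ennreal ((t - sum x I) ^ Suc k) \<partial>lborel_Pi I)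
                   * ennreal (1 / Suc k)"
    using insert by (subst nn_integral_multc[symmetric]) (auto simp: mult_ac)
  also have "\<dots> = ennreal (fact (Suc k) * t ^ (card I + Suc k) / fact (card I + Suc k))
                   * ennreal (1 / Suc k)"
    by (simp only: insert.IH)
  also have "\<dots> = ennreal (fact k * t ^ (card (insert j I) + k) / fact (card (insert j I) + k))"
    using insert assms(2) by (simp add: ennreal_mult'[symmetric] del: of_nat_Suc)
  finally show ?case .
qed

text \<open>The same value as for the slack \<open>t - \<Sum> x\<close>: the coordinates of a uniform point of the
  simplex, slack included, are exchangeable.\<close>

lemma nn_integral_corner_simplex_coord_power:
  assumes "finite I" "j \<in> I" "0 \<le> t"
  shows "(\<integral>\<^sup>+x\<in>corner_simplex I t. ennreal (x j ^ k) \<partial>lborel_Pi I)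
       = ennreal (fact k * t ^ (card I + k) / fact (card I + k))"
proof -
  define J where "J = I - {j}"
  have I: "I = insert j J" "j \<notin> J" "finite J"
    using assms unfolding J_def by auto
  have "(\<integral>\<^sup>+x\<in>corner_simplex I t. ennreal (x j ^ k) \<partial>lborel_Pi I)
      = (\<integral>\<^sup>+x\<in>corner_simplex J t. \<integral>\<^sup>+y\<in>{0..t - sum x J}. ennreal (y ^ k) \<partial>lborel
           \<partial>lborel_Pi J)"
    unfolding I(1) using I by (subst nn_integral_corner_simplex_insert) auto
  also have "\<dots> = (\<integral>\<^sup>+x\<in>corner_simplex J t. ennreal ((t - sum x J) ^ Suc k) * ennreal (1 / Suc k)
                     \<partial>lborel_Pi J)"
    by (intro nn_integral_cong, rename_tac x, case_tac "x \<in> corner_simplex J t")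
      (simp_all add: corner_simplex_def nn_integral_power_Icc ennreal_mult'[symmetric])
  also have "\<dots> = (\<integral>\<^sup>+x\<in>corner_simplex J t. ennreal ((t - sum x J) ^ Suc k) \<partial>lborel_Pi J)
                   * ennreal (1 / Suc k)"
    using I by (subst nn_integral_multc[symmetric]) (auto simp: mult_ac)
  also have "\<dots> = ennreal (fact (Suc k) * t ^ (card J + Suc k) / fact (card J + Suc k))
                   * ennreal (1 / Suc k)"
    using I assms(3) by (simp only: nn_integral_corner_simplex_slack_power)
  also have "\<dots> = ennreal (fact k * t ^ (card I + k) / fact (card I + k))"
    using I assms(3) by (simp add: ennreal_mult'[symmetric] del: of_nat_Suc)
  finally show ?thesis .
qed

lemma integral_pair_measure_mult_nonneg:
  fixes f g :: "_ \<Rightarrow> real"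
  assumes "sigma_finite_measure N"
    and [measurable]: "f \<in> borel_measurable M" "g \<in> borel_measurable N"
    and "\<And>x. 0 \<le> f x" "\<And>y. 0 \<le> g y"
  shows "(\<integral>(x, y). f x * g y \<partial>(M \<Otimes>\<^sub>M N)) = integral\<^sup>L M f * integral\<^sup>L N g"
proof -
  have "(\<integral>\<^sup>+(x, y). ennreal (f x * g y) \<partial>(M \<Otimes>\<^sub>M N))
      = (\<integral>\<^sup>+x. \<integral>\<^sup>+y. ennreal (f x) * ennreal (g y) \<partial>N \<partial>M)"
    using assms by (subst sigma_finite_measure.nn_integral_fst[symmetric]) (auto simp: ennreal_mult)
  also have "\<dots> = (\<integral>\<^sup>+x. ennreal (f x) \<partial>M) * (\<integral>\<^sup>+y. ennreal (g y) \<partial>N)"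
    by (simp add: nn_integral_cmult nn_integral_multc)
  finally show ?thesis
    using assms by (simp add: integral_eq_nn_integral enn2real_mult split_beta')
qed

lemma to_simplex_nonneg: "x \<in> simplex_coords p \<Longrightarrow> 0 \<le> to_simplex p x u"
  by (simp add: simplex_coords_def to_simplex_def)

lemma sum_to_simplex:
  assumes "1 \<le> p"
  shows "(\<Sum>u<p. to_simplex p x u) = 1"
proof -
  obtain n where p: "p = Suc n"
    using assms by (cases p) auto
  have "(\<Sum>u<n. to_simplex p x u) = (\<Sum>u<n. x u)"
    by (intro sum.cong) (auto simp: to_simplex_def p)
  then show ?thesis by (simp add: p to_simplex_def)
qed

lemma borel_measurable_to_simplex [measurable]:
  "(\<lambda>x. to_simplex p x u) \<in> borel_measurable (leb_coords p)"
proof (cases "u < p - 1")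
  case True
  then have "(\<lambda>x. to_simplex p x u) = (\<lambda>x. x u)" by (auto simp: to_simplex_def)
  then show ?thesis using True unfolding leb_coords_def by simp
next
  case False
  then have "(\<lambda>x. to_simplex p x u) = (\<lambda>x. 1 - (\<Sum>i<p-1. x i))" by (auto simp: to_simplex_def)
  then show ?thesis unfolding leb_coords_def by simp
qed

lemma simplex_coords_eq: "simplex_coords p = corner_simplex {..<p-1} 1 \<inter> space (leb_coords p)"
  by (auto simp: simplex_coords_def corner_simplex_def)

lemma sets_simplex_coords [measurable]: "simplex_coords p \<in> sets (leb_coords p)"
  unfolding simplex_coords_eq leb_coords_def by measurable

lemma sets_dirichlet_flat [measurable_cong]: "sets (dirichlet_flat p) = sets (leb_coords p)"
  by (simp add: dirichlet_flat_def)

lemma nn_integral_simplex_coords_power: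
  assumes "u < p"
  shows "(\<integral>\<^sup>+x\<in>simplex_coords p. ennreal (to_simplex p x u ^ k) \<partial>leb_coords p)
       = ennreal (fact k / fact (p - 1 + k))"
proof -
  let ?I = "{..<p-1}"
  have "(\<integral>\<^sup>+x\<in>simplex_coords p. ennreal (to_simplex p x u ^ k) \<partial>leb_coords p)
      = (\<integral>\<^sup>+x\<in>corner_simplex ?I 1. ennreal (to_simplex p x u ^ k) \<partial>lborel_Pi ?I)"
    unfolding simplex_coords_eq leb_coords_def by (intro nn_integral_cong) (simp add: indicator_def)
  also have "\<dots> = ennreal (fact k * 1 ^ (card ?I + k) / fact (card ?I + k))"
  proof (cases "u < p - 1")
    case True
    then have "(\<integral>\<^sup>+x\<in>corner_simplex ?I 1. ennreal (to_simplex p x u ^ k) \<partial>lborel_Pi ?I)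
        = (\<integral>\<^sup>+x\<in>corner_simplex ?I 1. ennreal (x u ^ k) \<partial>lborel_Pi ?I)"
      by (simp add: to_simplex_def)
    then show ?thesis
      using True by (simp add: nn_integral_corner_simplex_coord_power)
  next
    case False
    then have "(\<integral>\<^sup>+x\<in>corner_simplex ?I 1. ennreal (to_simplex p x u ^ k) \<partial>lborel_Pi ?I)
        = (\<integral>\<^sup>+x\<in>corner_simplex ?I 1. ennreal ((1 - sum x ?I) ^ k) \<partial>lborel_Pi ?I)"
      by (simp add: to_simplex_def)
    then show ?thesis
      by (simp add: nn_integral_corner_simplex_slack_power)
  qed
  finally show ?thesis by simp
qed

lemma emeasure_simplex_coords:
  "emeasure (leb_coords p) (simplex_coords p) = ennreal (1 / fact (p - 1))"
proof -
  have "emeasure (leb_coords p) (simplex_coords p) = (\<integral>\<^sup>+x\<in>simplex_coords p. 1 \<partial>leb_coords p)"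
    by simp
  also have "\<dots> = (\<integral>\<^sup>+x\<in>corner_simplex {..<p-1} 1. ennreal ((1 - sum x {..<p-1}) ^ 0)
                     \<partial>lborel_Pi {..<p-1})"
    unfolding simplex_coords_eq leb_coords_def by (intro nn_integral_cong) (simp add: indicator_def)
  also have "\<dots> = ennreal (1 / fact (p - 1))"
    using nn_integral_corner_simplex_slack_power[of "{..<p-1}" 1 0] by simp
  finally show ?thesis .
qed

lemma prob_space_dirichlet_flat: "prob_space (dirichlet_flat p)"
  unfolding dirichlet_flat_def
  by (rule prob_space_uniform_measure) (simp_all add: emeasure_simplex_coords)

lemma has_bochner_integral_dirichlet_flat_power:
  assumes "u < p"
  shows "has_bochner_integral (dirichlet_flat p) (\<lambda>x. to_simplex p x u ^ k)
           (fact k * fact (p - 1) / fact (p - 1 + k))" (is "has_bochner_integral _ _ ?m")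
proof (rule has_bochner_integral_nn_integral)
  show "AE x in dirichlet_flat p. 0 \<le> to_simplex p x u ^ k"
    unfolding dirichlet_flat_def by (intro AE_uniform_measureI AE_I2) (auto simp: to_simplex_nonneg)
  have "(\<integral>\<^sup>+x. ennreal (to_simplex p x u ^ k) \<partial>dirichlet_flat p)
      = ennreal (fact k / fact (p - 1 + k)) / ennreal (1 / fact (p - 1))"
    unfolding dirichlet_flat_def
    by (simp add: nn_integral_uniform_measure nn_integral_simplex_coords_power[OF assms]
        emeasure_simplex_coords)
  also have "\<dots> = ennreal ?m"
    by (simp add: divide_ennreal)
  finally show "(\<integral>\<^sup>+x. ennreal (to_simplex p x u ^ k) \<partial>dirichlet_flat p) = ennreal ?m" .
qed auto

definition sqdist_barycentre :: "nat \<Rightarrow> (nat \<Rightarrow> real) \<Rightarrow> real" where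
  "sqdist_barycentre p x = (\<Sum>u<p. (to_simplex p x u - 1 / real p)\<^sup>2)"

lemma borel_measurable_sqdist_barycentre [measurable]:
  "sqdist_barycentre p \<in> borel_measurable (leb_coords p)"
  unfolding sqdist_barycentre_def by measurable

lemma sqdist_barycentre_nonneg: "0 \<le> sqdist_barycentre p x"
  unfolding sqdist_barycentre_def by (simp add: sum_nonneg)

lemma sqdist_barycentre_eq:
  assumes "1 \<le> p"
  shows "sqdist_barycentre p x = (\<Sum>u<p. (to_simplex p x u)\<^sup>2) - 1 / real p"
proof -
  have "sqdist_barycentre p x
      = (\<Sum>u<p. (to_simplex p x u)\<^sup>2) - 2 / real p * (\<Sum>u<p. to_simplex p x u) + real p * (1 / real p)\<^sup>2"
    unfolding sqdist_barycentre_def power2_diff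
    by (simp add: sum.distrib sum_subtractf sum_distrib_left sum_divide_distrib algebra_simps)
  then show ?thesis
    using assms by (simp add: sum_to_simplex power2_eq_square)
qed

lemma has_bochner_integral_sqdist_barycentre:
  assumes "1 \<le> p"
  shows "has_bochner_integral (dirichlet_flat p) (sqdist_barycentre p)
           ((real p - 1) / (real p * (real p + 1)))"
proof -
  interpret prob_space "dirichlet_flat p" by (rule prob_space_dirichlet_flat)
  have "fact 2 * fact (p - 1) / fact (p - 1 + 2) = 2 / (real p * (real p + 1))"
  proof -
    obtain n where p: "p = Suc n" using assms by (cases p) auto
    have "fact (n + 2) = fact n * ((real n + 1) * (real n + 2))"
      by (simp add: algebra_simps)
    then show ?thesis by (simp add: p add.commute)
  qed
  then have "has_bochner_integral (dirichlet_flat p) (\<lambda>x. (to_simplex p x u)\<^sup>2)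
      (2 / (real p * (real p + 1)))" if "u < p" for u
    using has_bochner_integral_dirichlet_flat_power[OF that, of 2] by simp
  then have "has_bochner_integral (dirichlet_flat p) (\<lambda>x. (\<Sum>u<p. (to_simplex p x u)\<^sup>2) - 1 / real p)
      ((\<Sum>u<p. 2 / (real p * (real p + 1))) - 1 / real p)"
    by (intro has_bochner_integral_diff has_bochner_integral_sum)
      (auto simp: has_bochner_integral_iff prob_space)
  moreover have "(\<Sum>u<p. 2 / (real p * (real p + 1))) - 1 / real p
      = (real p - 1) / (real p * (real p + 1))"
    using assms by (simp add: divide_simps)
  moreover have "sqdist_barycentre p = (\<lambda>x. (\<Sum>u<p. (to_simplex p x u)\<^sup>2) - 1 / real p)"
    using assms by (simp add: fun_eq_iff sqdist_barycentre_eq)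
  ultimately show ?thesis
    by simp
qed

lemma indep_minus_indet_coupling:
  assumes "p \<noteq> 0" "q \<noteq> 0"
  shows "indep_coupling \<mu> \<nu> u v - indet_coupling p q \<mu> \<nu> u v
       = (\<mu> u - 1 / real p) * (\<nu> v - 1 / real q)"
  using assms unfolding indep_coupling_def indet_coupling_def by (simp add: field_simps)

theorem mainTheorem1:
  fixes p q :: nat
  assumes "p \<ge> 1" and "q \<ge> 1"
  shows "Delta p q = 1 / (real p * real q) * ((real p - 1) / (real p + 1)) * ((real q - 1) / (real q + 1))
         \<and> Delta p q \<le> 1 / (real p * real q)"
proof -
  interpret Q: prob_space "dirichlet_flat q"
    by (rule prob_space_dirichlet_flat)
  have "Delta p q = (\<integral>(x, y). sqdist_barycentre p x * sqdist_barycentre q y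
                      \<partial>(dirichlet_flat p \<Otimes>\<^sub>M dirichlet_flat q))"
    using assms unfolding Delta_def
    by (intro Bochner_Integration.integral_cong)
      (auto simp: indep_minus_indet_coupling power_mult_distrib sum_product sqdist_barycentre_def)
  also have "\<dots> = integral\<^sup>L (dirichlet_flat p) (sqdist_barycentre p)
                   * integral\<^sup>L (dirichlet_flat q) (sqdist_barycentre q)"
    by (rule integral_pair_measure_mult_nonneg)
      (auto simp: sqdist_barycentre_nonneg Q.sigma_finite_measure_axioms)
  also have "\<dots> = (real p - 1) / (real p * (real p + 1)) * ((real q - 1) / (real q * (real q + 1)))"
    using assms
    by (simp add: has_bochner_integral_integral_eq[OF has_bochner_integral_sqdist_barycentre])
  finally have "Delta p q
      = 1 / (real p * real q) * ((real p - 1) / (real p + 1)) * ((real q - 1) / (real q + 1))"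
    by simp
  moreover have "1 / (real p * real q) * (((real p - 1) / (real p + 1)) * ((real q - 1) / (real q + 1)))
      \<le> 1 / (real p * real q)"
    using assms by (intro mult_left_le mult_le_one) simp_all
  ultimately show ?thesis
    by (metis mult.assoc)
qed

end
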